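(* For all roles $r,s$ and all canonical global types $G$: if $r\neq s$ then $(\mathrm{enc}_s(G))\upharpoonright r = \mathrm{enc}^{r}_{s}(G\upharpoonright r)$.
   Context: Canonical global types: $G::=\mathsf{end}\mid t\mid\mu t.G\mid p\to q:\{l_i:G_i\}_{i\in I}$ ($p\neq q$, $I\neq\emptyset$, distinct labels, contractive equi-recursive). Routed global types additionally allow $p\to q\ \mathrm{via}\ s:\{l_i:G_i\}_{i\in I}$ ($p,q,s$ pairwise distinct): $p$ sends a choice intended for $q$ to router $s$, which forwards it. Local types: $\mathsf{end}\mid t\mid\mu t.T\mid q\oplus\{l_i:T_i\}$ (selection to $q$) $\mid q\,\&\{l_i:T_i\}$ (branching from $q$) $\mid q\oplus_s\{l_i:T_i\}$ (routed selection to $q$ via $s$) $\mid p\,\&_s\{l_i:T_i\}$ (routed branching from $p$ via $s$) $\mid\mathrm{route}\langle p\to q\rangle\{l_i:T_i\}$ (routing). Projection $G\upharpoonright r$: $\mathsf{end}\mapsto\mathsf{end}$, $t\mapsto t$, $\mu t.G\mapsto\mu t.(G\upharpoonright r)$ if $G\upharpoonright r$ is not a type variable, else $\mathsf{end}$; $p\to q:\{l_i:G_i\}\mapsto q\oplus\{l_i:G_i\upharpoonright r\}$ if $r=p$, $p\,\&\{l_i:G_i\upharpoonright r\}$ if $r=q$, $\sqcap_i(G_i\upharpoonright r)$ otherwise; $p\to q\ \mathrm{via}\ s:\{l_i:G_i\}\mapsto q\oplus_s\{\dots\}$ if $r=p$, $p\,\&_s\{\dots\}$ if $r=q$, $\mathrm{route}\langle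 p\to q\rangle\{l_i:G_i\upharpoonright r\}$ if $r=s$, $\sqcap_i(G_i\upharpoonright r)$ otherwise. Merge $\sqcap$: $T\sqcap T=T$; two branchings (plain, or routed with same sender and router) merge to a branching over the union of labels, merging continuations of shared labels; otherwise undefined. Global encoding $\mathrm{enc}_s$: identity on $\mathsf{end}$, $t$; $\mathrm{enc}_s(\mu t.G)=\mu t.\mathrm{enc}_s(G)$; $\mathrm{enc}_s(p\to q:\{l_i:G_i\})=p\to q:\{l_i:\mathrm{enc}_s(G_i)\}$ if $s\in\{p,q\}$, else $p\to q\ \mathrm{via}\ s:\{l_i:\mathrm{enc}_s(G_i)\}$. Local encoding $\mathrm{enc}^q_s(T)$ (of a canonical local type $T$ of role $q$ w.r.t. router $s$): identity on $\mathsf{end}$, $t$; commutes with $\mu t$; $\mathrm{enc}^q_s(p\oplus\{l_i:T_i\})=p\oplus\{l_i:\mathrm{enc}^q_s(T_i)\}$ if $s\in\{p,q\}$, else $p\oplus_s\{l_i:\mathrm{enc}^q_s(T_i)\}$; $\mathrm{enc}^q_s(p\,\&\{l_i:T_i\})=p\,\&\{l_i:\mathrm{enc}^q_s(T_i)\}$ if $s\in\{p,q\}$, else $p\,\&_s\{l_i:\mathrm{enc}^q_s(T_i)\}$. *)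

theory Defs
  imports Main
begin

(* Labels: type 'l (linearly ordered, used only to fix a
   canonical order for the n-ary merge).
   A labelled choice {l_i : X_i}_{i in I} is a partial map 'l => X option
   with finite non-empty domain; labels are distinct by construction. *)

datatype ('r, 'l) gty =
    GEnd
  | GVar nat
  | GRec nat "('r, 'l) gty"
  | GMsg 'r 'r "'l \<Rightarrow> ('r, 'l) gty option"
  | GVia 'r 'r 'r "'l \<Rightarrow> ('r, 'l) gty option"       (* p -> q via s : {l_i : G_i} *)

datatype ('r, 'l) lty =
    LEnd
  | LVar nat
  | LRec nat "('r, 'l) lty"
  | LSel 'r "'l \<Rightarrow> ('r, 'l) lty option"
  | LBra 'r "'l \<Rightarrow> ('r, 'l) lty option"
  | LRSel 'r 'r "'l \<Rightarrow> ('r, 'l) lty option"          (* q (+)_s {..} : target q, router s *)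
  | LRBra 'r 'r "'l \<Rightarrow> ('r, 'l) lty option"          (* p &_s {..} : sender p, router s *)
  | LRoute 'r 'r "'l \<Rightarrow> ('r, 'l) lty option"

fun is_lvar :: "('r, 'l) lty \<Rightarrow> bool" where
  "is_lvar (LVar _) = True"
| "is_lvar _ = False"

fun is_gvar :: "('r, 'l) gty \<Rightarrow> bool" where
  "is_gvar (GVar _) = True"
| "is_gvar _ = False"

inductive canonical :: "('r, 'l) gty \<Rightarrow> bool" where
  "canonical GEnd"
| "canonical (GVar t)"
| "canonical G \<Longrightarrow> \<not> is_gvar G \<Longrightarrow> canonical (GRec t G)"
| "p \<noteq> q \<Longrightarrow> dom b \<noteq> {} \<Longrightarrow> finite (dom b) \<Longrightarrow>
   (\<forall>l g. b l = Some g \<longrightarrow> canonical g) \<Longrightarrow> canonical (GMsg p q b)"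

primrec enc_g :: "'r \<Rightarrow> ('r, 'l) gty \<Rightarrow> ('r, 'l) gty" where
  "enc_g s GEnd = GEnd"
| "enc_g s (GVar t) = GVar t"
| "enc_g s (GRec t G) = GRec t (enc_g s G)"
| "enc_g s (GMsg p q b) =
     (if s = p \<or> s = q then GMsg p q (\<lambda>l. map_option (enc_g s) (b l))
      else GVia p q s (\<lambda>l. map_option (enc_g s) (b l)))"
| "enc_g s (GVia p q s' b) = GVia p q s' (\<lambda>l. map_option (enc_g s) (b l))"

(* Local encoding enc^q_s of a local type of role q w.r.t. router s
   (only the canonical constructors matter; the others are mapped homomorphically) *)
primrec enc_l :: "'r \<Rightarrow> 'r \<Rightarrow> ('r, 'l) lty \<Rightarrow> ('r, 'l) lty" where
  "enc_l q s LEnd = LEnd"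
| "enc_l q s (LVar t) = LVar t"
| "enc_l q s (LRec t T) = LRec t (enc_l q s T)"
| "enc_l q s (LSel p b) =
     (if s = p \<or> s = q then LSel p (\<lambda>l. map_option (enc_l q s) (b l))
      else LRSel p s (\<lambda>l. map_option (enc_l q s) (b l)))"
| "enc_l q s (LBra p b) =
     (if s = p \<or> s = q then LBra p (\<lambda>l. map_option (enc_l q s) (b l))
      else LRBra p s (\<lambda>l. map_option (enc_l q s) (b l)))"
| "enc_l q s (LRSel p s' b) = LRSel p s' (\<lambda>l. map_option (enc_l q s) (b l))"
| "enc_l q s (LRBra p s' b) = LRBra p s' (\<lambda>l. map_option (enc_l q s) (b l))"
| "enc_l q s (LRoute p p' b) = LRoute p p' (\<lambda>l. map_option (enc_l q s) (b l))"

(* Binary merge, as a relation: merge T1 T2 T  means  T1 \<sqinter> T2 = T *)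
inductive merge :: "('r, 'l) lty \<Rightarrow> ('r, 'l) lty \<Rightarrow> ('r, 'l) lty \<Rightarrow> bool" where
  merge_refl: "merge T T T"
| merge_bra: "\<lbrakk> \<forall>l. b1 l = None \<and> b2 l = None \<longrightarrow> b l = None;
               \<forall>l x. b1 l = Some x \<and> b2 l = None \<longrightarrow> b l = Some x;
               \<forall>l y. b1 l = None \<and> b2 l = Some y \<longrightarrow> b l = Some y;
               \<forall>l x y. b1 l = Some x \<and> b2 l = Some y \<longrightarrow> (\<exists>z. b l = Some z \<and> merge x y z) \<rbrakk>
              \<Longrightarrow> merge (LBra p b1) (LBra p b2) (LBra p b)"
| merge_rbra: "\<lbrakk> \<forall>l. b1 l = None \<and> b2 l = None \<longrightarrow> b l = None;
               \<forall>l x. b1 l = Some x \<and> b2 l = None \<longrightarrow> b l = Some x;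
               \<forall>l y. b1 l = None \<and> b2 l = Some y \<longrightarrow> b l = Some y;
               \<forall>l x y. b1 l = Some x \<and> b2 l = Some y \<longrightarrow> (\<exists>z. b l = Some z \<and> merge x y z) \<rbrakk>
              \<Longrightarrow> merge (LRBra p s b1) (LRBra p s b2) (LRBra p s b)"

inductive merge_list :: "('r, 'l) lty list \<Rightarrow> ('r, 'l) lty \<Rightarrow> bool" where
  "merge_list [T] T"
| "merge_list Ts T' \<Longrightarrow> merge T T' U \<Longrightarrow> merge_list (T # Ts) U"

(* Projection, as a relation: proj G r T  means  G \<upharpoonleft> r = T (defined) *)
inductive proj :: "('r, 'l::linorder) gty \<Rightarrow> 'r \<Rightarrow> ('r, 'l) lty \<Rightarrow> bool" where
  "proj GEnd r LEnd"
| "proj (GVar t) r (LVar t)"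
| "proj G r T \<Longrightarrow> \<not> is_lvar T \<Longrightarrow> proj (GRec t G) r (LRec t T)"
| "proj G r T \<Longrightarrow> is_lvar T \<Longrightarrow> proj (GRec t G) r LEnd"
| "r = p \<Longrightarrow> finite (dom b) \<Longrightarrow>
   (\<forall>l. bt l = None \<longleftrightarrow> b l = None) \<Longrightarrow>
   (\<forall>l g T. b l = Some g \<and> bt l = Some T \<longrightarrow> proj g r T) \<Longrightarrow>
   proj (GMsg p q b) r (LSel q bt)"
| "r = q \<Longrightarrow> r \<noteq> p \<Longrightarrow> finite (dom b) \<Longrightarrow>
   (\<forall>l. bt l = None \<longleftrightarrow> b l = None) \<Longrightarrow>
   (\<forall>l g T. b l = Some g \<and> bt l = Some T \<longrightarrow> proj g r T) \<Longrightarrow>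
   proj (GMsg p q b) r (LBra p bt)"
| "r \<noteq> p \<Longrightarrow> r \<noteq> q \<Longrightarrow> finite (dom b) \<Longrightarrow>
   (\<forall>l g. b l = Some g \<longrightarrow> proj g r (Ts l)) \<Longrightarrow>
   merge_list (map Ts (sorted_list_of_set (dom b))) T \<Longrightarrow>
   proj (GMsg p q b) r T"
| "r = p \<Longrightarrow> finite (dom b) \<Longrightarrow>
   (\<forall>l. bt l = None \<longleftrightarrow> b l = None) \<Longrightarrow>
   (\<forall>l g T. b l = Some g \<and> bt l = Some T \<longrightarrow> proj g r T) \<Longrightarrow>
   proj (GVia p q s b) r (LRSel q s bt)"
| "r = q \<Longrightarrow> r \<noteq> p \<Longrightarrow> finite (dom b) \<Longrightarrow>
   (\<forall>l. bt l = None \<longleftrightarrow> b l = None) \<Longrightarrow>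
   (\<forall>l g T. b l = Some g \<and> bt l = Some T \<longrightarrow> proj g r T) \<Longrightarrow>
   proj (GVia p q s b) r (LRBra p s bt)"
| "r = s \<Longrightarrow> r \<noteq> p \<Longrightarrow> r \<noteq> q \<Longrightarrow> finite (dom b) \<Longrightarrow>
   (\<forall>l. bt l = None \<longleftrightarrow> b l = None) \<Longrightarrow>
   (\<forall>l g T. b l = Some g \<and> bt l = Some T \<longrightarrow> proj g r T) \<Longrightarrow>
   proj (GVia p q s b) r (LRoute p q bt)"
| "r \<noteq> p \<Longrightarrow> r \<noteq> q \<Longrightarrow> r \<noteq> s \<Longrightarrow> finite (dom b) \<Longrightarrow>
   (\<forall>l g. b l = Some g \<longrightarrow> proj g r (Ts l)) \<Longrightarrow>
   merge_list (map Ts (sorted_list_of_set (dom b))) T \<Longrightarrow>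
   proj (GVia p q s b) r T"

end

theory Submission
  imports Defs
begin

(* Both encodings take the same routing decision at every interaction seen by r: globally
   p -> q is routed through s iff s is not among p, q, and in the projection onto a
   participant r the peer is the other of p, q, which the local encoding routes iff it is not
   s -- the same condition, as r <> s.  So the encodings commute with every rule of
   projection, and for the merge of the branches of a third party they commute because the
   local encoding is a merge homomorphism.
   For the converse, let dec_l forget all routers.  It is again a merge homomorphism, and merge
   is a partial function; hence a merge of encodings is the encoding of the merge of their
   decodings.  By induction on G, every projection T of enc_s G is therefore the encoding of
   dec_l T, and dec_l T is a projection of G. *)

primrec dec_l :: "('r, 'l) lty \<Rightarrow> ('r, 'l) lty" where
  "dec_l LEnd = LEnd"
| "dec_l (LVar t) = LVar t"
| "dec_l (LRec t T) = LRec t (dec_l T)"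
| "dec_l (LSel p b) = LSel p (\<lambda>l. map_option dec_l (b l))"
| "dec_l (LBra p b) = LBra p (\<lambda>l. map_option dec_l (b l))"
| "dec_l (LRSel p s b) = LSel p (\<lambda>l. map_option dec_l (b l))"
| "dec_l (LRBra p s b) = LBra p (\<lambda>l. map_option dec_l (b l))"
| "dec_l (LRoute p q b) = LRoute p q (\<lambda>l. map_option dec_l (b l))"

(* The premises of merge_bra and merge_rbra, with the merge of shared continuations abstracted
   to a relation M. *)
definition merge_branches ::
    "('a \<Rightarrow> 'a \<Rightarrow> 'a \<Rightarrow> bool) \<Rightarrow> ('l \<Rightarrow> 'a option) \<Rightarrow> ('l \<Rightarrow> 'a option) \<Rightarrow> ('l \<Rightarrow> 'a option) \<Rightarrow> bool"
  where
  "merge_branches M b1 b2 b \<longleftrightarrow>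
     (\<forall>l. b1 l = None \<and> b2 l = None \<longrightarrow> b l = None) \<and>
     (\<forall>l x. b1 l = Some x \<and> b2 l = None \<longrightarrow> b l = Some x) \<and>
     (\<forall>l y. b1 l = None \<and> b2 l = Some y \<longrightarrow> b l = Some y) \<and>
     (\<forall>l x y. b1 l = Some x \<and> b2 l = Some y \<longrightarrow> (\<exists>z. b l = Some z \<and> M x y z))"

lemma merge_branches_refl: "(\<And>x. M x x x) \<Longrightarrow> merge_branches M b b b"
  by (auto simp: merge_branches_def)

lemma merge_branches_map:
  assumes "merge_branches M b1 b2 b" and "\<And>x y z. M x y z \<Longrightarrow> M' (f x) (f y) (f z)"
  shows "merge_branches M' (\<lambda>l. map_option f (b1 l)) (\<lambda>l. map_option f (b2 l)) (\<lambda>l. map_option f (b l))"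
proof -
  have "\<exists>z. map_option f (b l) = Some z \<and> M' (f x) (f y) z"
    if "b1 l = Some x" and "b2 l = Some y" for l x y
  proof -
    from assms(1) that obtain z where "b l = Some z" and "M x y z"
      unfolding merge_branches_def by blast
    then show ?thesis using assms(2) by simp
  qed
  with assms(1) show ?thesis
    unfolding merge_branches_def by auto
qed

lemma merge_branches_unique:
  assumes "merge_branches M b1 b2 b" and "merge_branches M' b1 b2 b'"
    and "\<And>l x y z z'. b1 l = Some x \<Longrightarrow> b2 l = Some y \<Longrightarrow> M x y z \<Longrightarrow> M' x y z' \<Longrightarrow> z' = z"
  shows "b' = b"
proof
  fix l
  show "b' l = b l"
  proof (cases "b1 l"; cases "b2 l")
    fix x y
    assume xy: "b1 l = Some x" "b2 l = Some y"
    with assms(1,2) obtain z z' where "b l = Some z" "M x y z" "b' l = Some z'" "M' x y z'"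
      unfolding merge_branches_def by meson
    with assms(3)[OF xy] show ?thesis by simp
  qed (use assms(1,2) in \<open>auto simp: merge_branches_def\<close>)
qed

lemma merge_LBraI: "merge_branches merge b1 b2 b \<Longrightarrow> merge (LBra p b1) (LBra p b2) (LBra p b)"
  unfolding merge_branches_def by (rule merge_bra) auto

lemma merge_LRBraI: "merge_branches merge b1 b2 b \<Longrightarrow> merge (LRBra p s b1) (LRBra p s b2) (LRBra p s b)"
  unfolding merge_branches_def by (rule merge_rbra) auto

lemma merge_LBraD: "merge (LBra p b1) (LBra p b2) Z \<Longrightarrow> \<exists>b. Z = LBra p b \<and> merge_branches merge b1 b2 b"
  by (cases rule: merge.cases) (auto simp: merge_branches_def merge.merge_refl)

lemma merge_LRBraD:
  "merge (LRBra p s b1) (LRBra p s b2) Z \<Longrightarrow> \<exists>b. Z = LRBra p s b \<and> merge_branches merge b1 b2 b"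
  by (cases rule: merge.cases) (auto simp: merge_branches_def merge.merge_refl)

lemma merge_induct [consumes 1, case_names refl bra rbra]:
  assumes "merge X Y Z"
    and "\<And>T. P T T T"
    and "\<And>b1 b2 b p. merge_branches (\<lambda>x y z. merge x y z \<and> P x y z) b1 b2 b \<Longrightarrow>
      P (LBra p b1) (LBra p b2) (LBra p b)"
    and "\<And>b1 b2 b p s. merge_branches (\<lambda>x y z. merge x y z \<and> P x y z) b1 b2 b \<Longrightarrow>
      P (LRBra p s b1) (LRBra p s b2) (LRBra p s b)"
  shows "P X Y Z"
  using assms(1)
proof (induction rule: merge.induct)
  case (merge_refl T)
  show ?case by (rule assms(2))
next
  case (merge_bra b1 b2 b p)
  then show ?case by (intro assms(3)) (simp add: merge_branches_def)
next
  case (merge_rbra b1 b2 b p s)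
  then show ?case by (intro assms(4)) (simp add: merge_branches_def)
qed

lemma merge_enc_l: "merge X Y Z \<Longrightarrow> merge (enc_l r s X) (enc_l r s Y) (enc_l r s Z)"
proof (induction rule: merge_induct)
  case (bra b1 b2 b p)
  then have "merge_branches merge (\<lambda>l. map_option (enc_l r s) (b1 l))
      (\<lambda>l. map_option (enc_l r s) (b2 l)) (\<lambda>l. map_option (enc_l r s) (b l))"
    by (rule merge_branches_map) blast
  then show ?case by (simp add: merge_LBraI merge_LRBraI)
next
  case (rbra b1 b2 b p s')
  then have "merge_branches merge (\<lambda>l. map_option (enc_l r s) (b1 l))
      (\<lambda>l. map_option (enc_l r s) (b2 l)) (\<lambda>l. map_option (enc_l r s) (b l))"
    by (rule merge_branches_map) blast
  then show ?case by (simp add: merge_LRBraI)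
qed (rule merge_refl)

lemma merge_dec_l: "merge X Y Z \<Longrightarrow> merge (dec_l X) (dec_l Y) (dec_l Z)"
proof (induction rule: merge_induct)
  case (bra b1 b2 b p)
  then have "merge_branches merge (\<lambda>l. map_option dec_l (b1 l))
      (\<lambda>l. map_option dec_l (b2 l)) (\<lambda>l. map_option dec_l (b l))"
    by (rule merge_branches_map) blast
  then show ?case by (simp add: merge_LBraI)
next
  case (rbra b1 b2 b p s)
  then have "merge_branches merge (\<lambda>l. map_option dec_l (b1 l))
      (\<lambda>l. map_option dec_l (b2 l)) (\<lambda>l. map_option dec_l (b l))"
    by (rule merge_branches_map) blast
  then show ?case by (simp add: merge_LBraI)
qed (rule merge_refl)

lemma merge_idem:
  fixes T U :: "('r, 'l) lty"
  assumes "merge T T U"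
  shows "U = T"
proof -
  have "merge T1 T2 U1 \<Longrightarrow> T2 = T1 \<Longrightarrow> U1 = T1" for T1 T2 U1 :: "('r, 'l) lty"
  proof (induction rule: merge_induct)
    case (bra b1 b2 b p)
    then have "merge_branches (\<lambda>x y z. merge x y z \<and> (y = x \<longrightarrow> z = x)) b1 b1 b"
      by simp
    moreover have "merge_branches (\<lambda>x y z. z = x) b1 b1 b1"
      by (rule merge_branches_refl) (rule refl)
    ultimately have "b1 = b"
      by (rule merge_branches_unique) auto
    with bra show ?case by simp
  next
    case (rbra b1 b2 b p s)
    then have "merge_branches (\<lambda>x y z. merge x y z \<and> (y = x \<longrightarrow> z = x)) b1 b1 b"
      by simp
    moreover have "merge_branches (\<lambda>x y z. z = x) b1 b1 b1"
      by (rule merge_branches_refl) (rule refl)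
    ultimately have "b1 = b"
      by (rule merge_branches_unique) auto
    with rbra show ?case by simp
  qed simp
  with assms show ?thesis by blast
qed

lemma merge_functional: "merge X Y Z \<Longrightarrow> merge X Y Z' \<Longrightarrow> Z' = Z"
proof (induction arbitrary: Z' rule: merge_induct)
  case refl
  then show ?case by (rule merge_idem)
next
  case (bra b1 b2 b p)
  obtain b' where "Z' = LBra p b'" and "merge_branches merge b1 b2 b'"
    using merge_LBraD[OF bra(2)] by blast
  with merge_branches_unique[OF bra(1) this(2)] show ?case by blast
next
  case (rbra b1 b2 b p s)
  obtain b' where "Z' = LRBra p s b'" and "merge_branches merge b1 b2 b'"
    using merge_LRBraD[OF rbra(2)] by blast
  with merge_branches_unique[OF rbra(1) this(2)] show ?case by blast
qed

lemma not_merge_list_Nil: "\<not> merge_list [] T"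
  by (auto elim: merge_list.cases)

inductive_cases merge_list_ConsE: "merge_list (T # Ts) U"

lemma merge_list_functional: "merge_list Ts T \<Longrightarrow> merge_list Ts T' \<Longrightarrow> T' = T"
proof (induction arbitrary: T' rule: merge_list.induct)
  case (1 T)
  then show ?case by (auto elim: merge_list_ConsE simp: not_merge_list_Nil)
next
  case (2 Ts U T V)
  from \<open>merge_list (T # Ts) T'\<close> obtain U' where "merge_list Ts U'" "merge T U' T'"
    using \<open>merge_list Ts U\<close> by (auto elim: merge_list_ConsE simp: not_merge_list_Nil)
  then show ?case using "2.IH" \<open>merge T U V\<close> merge_functional by metis
qed

lemma merge_list_map:
  assumes "merge_list Ts T" and "\<And>X Y Z. merge X Y Z \<Longrightarrow> merge (f X) (f Y) (f Z)"
  shows "merge_list (map f Ts) (f T)"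
  using assms(1)
proof induction
  case (2 Ts T' T U)
  then show ?case by (auto intro: merge_list.intros(2) assms(2)[OF \<open>merge T T' U\<close>])
qed (auto intro: merge_list.intros(1))

lemma is_lvar_enc_l [simp]: "is_lvar (enc_l r s T) = is_lvar T"
  by (cases T) auto

lemma is_lvar_dec_l [simp]: "is_lvar (dec_l T) = is_lvar T"
  by (cases T) auto

lemma proj_enc_g: "proj G r T \<Longrightarrow> r \<noteq> s \<Longrightarrow> proj (enc_g s G) r (enc_l r s T)"
proof (induction rule: proj.induct)
  case (7 r p q b Ts T)
  have "merge_list (map (enc_l r s \<circ> Ts) (sorted_list_of_set (dom b))) (enc_l r s T)"
    using merge_list_map[OF \<open>merge_list (map Ts (sorted_list_of_set (dom b))) T\<close> merge_enc_l]
    by simp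
  with 7 show ?case
    by (auto intro!: proj.intros(7,11)[where Ts = "enc_l r s \<circ> Ts"] simp: dom_map_option)
next
  case (11 r p q s' b Ts T)
  have "merge_list (map (enc_l r s \<circ> Ts) (sorted_list_of_set (dom b))) (enc_l r s T)"
    using merge_list_map[OF \<open>merge_list (map Ts (sorted_list_of_set (dom b))) T\<close> merge_enc_l]
    by simp
  with 11 show ?case
    by (auto intro!: proj.intros(11)[where Ts = "enc_l r s \<circ> Ts"] simp: dom_map_option)
qed (auto intro!: proj.intros(1-6,8-10) simp: dom_map_option)

lemma merge_list_enc_l_dec_l:
  assumes "merge_list Us U" and "\<forall>X\<in>set Us. enc_l r s (dec_l X) = X"
  shows "enc_l r s (dec_l U) = U"
proof -
  have "merge_list (map (enc_l r s) (map dec_l Us)) (enc_l r s (dec_l U))"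
    by (intro merge_list_map[OF merge_list_map[OF assms(1)]] merge_enc_l merge_dec_l)
  moreover have "map (enc_l r s) (map dec_l Us) = Us"
    using assms(2) by (simp add: map_idI)
  ultimately show ?thesis
    using assms(1) merge_list_functional by simp
qed

definition decodes_proj :: "'r \<Rightarrow> 'r \<Rightarrow> ('r, 'l::linorder) gty \<Rightarrow> bool" where
  "decodes_proj r s G \<longleftrightarrow>
     (\<forall>T. proj (enc_g s G) r T \<longrightarrow> proj G r (dec_l T) \<and> enc_l r s (dec_l T) = T)"

lemma decodes_proj_branches:
  assumes "\<forall>g\<in>ran b. decodes_proj r s g"
    and dom_bt: "\<forall>l. bt l = None \<longleftrightarrow> map_option (enc_g s) (b l) = None"
    and proj_bt: "\<forall>l g T. map_option (enc_g s) (b l) = Some g \<and> bt l = Some T \<longrightarrow> proj g r T"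
  shows "\<forall>l. map_option dec_l (bt l) = None \<longleftrightarrow> b l = None"
    and "\<forall>l g T. b l = Some g \<and> map_option dec_l (bt l) = Some T \<longrightarrow> proj g r T"
    and "(\<lambda>l. map_option (enc_l r s) (map_option dec_l (bt l))) = bt"
proof -
  have dom: "bt l = None \<longleftrightarrow> b l = None" for l
    using dom_bt by simp
  have decoded: "proj g r (dec_l T) \<and> enc_l r s (dec_l T) = T"
    if "b l = Some g" and "bt l = Some T" for l g T
    using assms(1) proj_bt[rule_format, of l "enc_g s g" T] that
    by (auto simp: decodes_proj_def ranI)
  show "\<forall>l. map_option dec_l (bt l) = None \<longleftrightarrow> b l = None"
    using dom by simp
  show "\<forall>l g T. b l = Some g \<and> map_option dec_l (bt l) = Some T \<longrightarrow> proj g r T"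
    using decoded by auto
  show "(\<lambda>l. map_option (enc_l r s) (map_option dec_l (bt l))) = bt"
  proof
    fix l
    show "map_option (enc_l r s) (map_option dec_l (bt l)) = bt l"
      using dom[of l] decoded[of l] by (cases "b l"; cases "bt l") auto
  qed
qed

lemma decodes_proj_merge:
  assumes "\<forall>g\<in>ran b. decodes_proj r s g" and "finite (dom b)" and "r \<noteq> p" and "r \<noteq> q"
    and proj_Ts: "\<forall>l g. map_option (enc_g s) (b l) = Some g \<longrightarrow> proj g r (Ts l)"
    and merge_Ts: "merge_list (map Ts (sorted_list_of_set (dom b))) T"
  shows "proj (GMsg p q b) r (dec_l T) \<and> enc_l r s (dec_l T) = T"
proof -
  have decoded: "proj g r (dec_l (Ts l)) \<and> enc_l r s (dec_l (Ts l)) = Ts l" if "b l = Some g" for l g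
    using assms(1) proj_Ts[rule_format, of l "enc_g s g"] that by (auto simp: decodes_proj_def ranI)
  have "\<forall>l g. b l = Some g \<longrightarrow> proj g r ((dec_l \<circ> Ts) l)"
    using decoded by simp
  moreover have "merge_list (map (dec_l \<circ> Ts) (sorted_list_of_set (dom b))) (dec_l T)"
    using merge_list_map[OF merge_Ts merge_dec_l] by simp
  ultimately have "proj (GMsg p q b) r (dec_l T)"
    by (rule proj.intros(7)[OF \<open>r \<noteq> p\<close> \<open>r \<noteq> q\<close> \<open>finite (dom b)\<close>])
  moreover have "\<forall>X\<in>set (map Ts (sorted_list_of_set (dom b))). enc_l r s (dec_l X) = X"
    using decoded \<open>finite (dom b)\<close> by auto
  ultimately show ?thesis
    using merge_list_enc_l_dec_l[OF merge_Ts] by blast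
qed

lemma decodes_proj_GMsg:
  assumes "\<forall>g\<in>ran b. decodes_proj r s g" and "finite (dom b)" and "r \<noteq> s"
  shows "decodes_proj r s (GMsg p q b)"
  unfolding decodes_proj_def
proof (intro allI impI)
  fix T
  note branches = decodes_proj_branches[OF assms(1)]
  note merged = decodes_proj_merge[OF assms(1,2)]
  assume "proj (enc_g s (GMsg p q b)) r T"
  then consider "s = p \<or> s = q" "proj (GMsg p q (\<lambda>l. map_option (enc_g s) (b l))) r T"
    | "\<not> (s = p \<or> s = q)" "proj (GVia p q s (\<lambda>l. map_option (enc_g s) (b l))) r T"
    by (auto split: if_splits)
  then show "proj (GMsg p q b) r (dec_l T) \<and> enc_l r s (dec_l T) = T"
  proof cases
    case 1
    from 1(2) show ?thesis
    proof cases
      case (5 bt)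
      then show ?thesis
        using proj.intros(5)[OF 5(2) assms(2) branches(1,2)[OF 5(4,5)]]
          branches(3)[OF 5(4,5)] 1(1) \<open>r \<noteq> s\<close> by auto
    next
      case (6 bt)
      then show ?thesis
        using proj.intros(6)[OF 6(2,3) assms(2) branches(1,2)[OF 6(5,6)]]
          branches(3)[OF 6(5,6)] 1(1) \<open>r \<noteq> s\<close> by auto
    next
      case (7 Ts)
      then show ?thesis using merged by (simp add: dom_map_option)
    qed
  next
    case 2
    from 2(2) show ?thesis
    proof cases
      case (8 bt)
      then show ?thesis
        using proj.intros(5)[OF 8(2) assms(2) branches(1,2)[OF 8(4,5)]]
          branches(3)[OF 8(4,5)] 2(1) by auto
    next
      case (9 bt)
      then show ?thesis
        using proj.intros(6)[OF 9(2,3) assms(2) branches(1,2)[OF 9(5,6)]]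
          branches(3)[OF 9(5,6)] 2(1) by auto
    next
      case (11 Ts)
      then show ?thesis using merged by (simp add: dom_map_option)
    qed (use \<open>r \<noteq> s\<close> in simp)
  qed
qed

lemma canonical_decodes_proj:
  assumes "canonical G" and "r \<noteq> s"
  shows "decodes_proj r s G"
  using assms(1)
proof induction
  case 1
  show ?case
    unfolding decodes_proj_def by (auto elim!: proj.cases intro: proj.intros(1))
next
  case (2 t)
  show ?case
    unfolding decodes_proj_def by (auto elim!: proj.cases intro: proj.intros(2))
next
  case (3 G t)
  have decoded: "proj G r (dec_l T) \<and> enc_l r s (dec_l T) = T" if "proj (enc_g s G) r T" for T
    using "3.IH" that unfolding decodes_proj_def by blast
  show ?case
    unfolding decodes_proj_def
  proof (intro allI impI)
    fix T
    assume "proj (enc_g s (GRec t G)) r T"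
    then have "proj (GRec t (enc_g s G)) r T" by simp
    then show "proj (GRec t G) r (dec_l T) \<and> enc_l r s (dec_l T) = T"
      by cases (auto dest!: decoded intro: proj.intros(3,4))
  qed
next
  case (4 p q b)
  then show ?case using decodes_proj_GMsg[of b r s p q] assms(2) by (auto simp: ran_def)
qed

theorem lemma4p10:
  fixes r s :: 'r and G :: "('r, 'l::linorder) gty" and T :: "('r, 'l) lty"
  assumes "r \<noteq> s" and "canonical G"
  shows "proj (enc_g s G) r T \<longleftrightarrow> (\<exists>T'. proj G r T' \<and> T = enc_l r s T')"
proof
  assume "proj (enc_g s G) r T"
  with canonical_decodes_proj[OF assms(2,1)] show "\<exists>T'. proj G r T' \<and> T = enc_l r s T'"
    unfolding decodes_proj_def by metis
next
  assume "\<exists>T'. proj G r T' \<and> T = enc_l r s T'"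
  with proj_enc_g[OF _ assms(1)] show "proj (enc_g s G) r T" by blast
qed

end
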